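(* Let $n, N_D, p_1, p_2, r_1, r_2$ be positive integers with $p_1\le N_D$ and $p_2\le N_D$, let $(\boldsymbol{x}^{(i)}, y^{(i)}) \in \mathbb{R}^n\times\mathbb{R}$, $i\in\{1,\dots,N_D\}$, be data points, let $\boldsymbol{g}:\mathbb{R}^n\to\mathbb{R}^{r_1}$, $\boldsymbol{h}:\mathbb{R}^n\to\mathbb{R}^{r_2}$ be continuous, and let $M>0$. Consider the mixed-integer quadratic program $$\min_{\boldsymbol{V},\boldsymbol{W},\alpha^{(i)},\beta^{(i)},\boldsymbol{\gamma}^{(i)},\boldsymbol{\delta}^{(i)}} \sum_{i=1}^{N_D} \big(y^{(i)} - (\alpha^{(i)}-\beta^{(i)})\big)^2$$ over $\boldsymbol{V}\in\mathbb{R}^{p_1\times r_1}$, $\boldsymbol{W}\in\mathbb{R}^{p_2\times r_2}$, subject to, for all $i\in\{1,\dots,N_D\}$: $\alpha^{(i)},\beta^{(i)}\in\mathbb{R}$, $\boldsymbol{V}\boldsymbol{g}(\boldsymbol{x}^{(i)}) \le \boldsymbol{1}\alpha^{(i)}$, $\boldsymbol{V}\boldsymbol{g}(\boldsymbol{x}^{(i)}) + M(\boldsymbol{1}-\boldsymbol{\delta}^{(i)}) \ge \boldsymbol{1}\alpha^{(i)}$, $\sum_{k=1}^{p_1}\boldsymbol{\delta}^{(i)}_k = 1$, $\boldsymbol{\delta}^{(i)}\in\{0,1\}^{p_1}$, $\boldsymbol{W}\boldsymbol{h}(\boldsymbol{x}^{(i)}) \le \boldsymbol{1}\beta^{(i)}$,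 $\boldsymbol{W}\boldsymbol{h}(\boldsymbol{x}^{(i)}) + M(\boldsymbol{1}-\boldsymbol{\gamma}^{(i)}) \ge \boldsymbol{1}\beta^{(i)}$, $\sum_{k=1}^{p_2}\boldsymbol{\gamma}^{(i)}_k = 1$, $\boldsymbol{\gamma}^{(i)}\in\{0,1\}^{p_2}$. Then there exists an optimal solution of this problem satisfying $$\boldsymbol{\delta}^{(i)}_k = 0 \ \text{ for all } i\in\{1,\dots,p_1-1\},\ k\in\{i+1,\dots,p_1\},$$ $$\boldsymbol{\gamma}^{(i)}_k = 0 \ \text{ for all } i\in\{1,\dots,p_2-1\},\ k\in\{i+1,\dots,p_2\},$$ i.e., $\boldsymbol{\delta}^{(1)}_{2:p_1}=\boldsymbol{0}, \boldsymbol{\delta}^{(2)}_{3:p_1}=\boldsymbol{0},\dots,\boldsymbol{\delta}^{(p_1-1)}_{p_1}=0$ and $\boldsymbol{\gamma}^{(1)}_{2:p_2}=\boldsymbol{0},\dots,\boldsymbol{\gamma}^{(p_2-1)}_{p_2}=0$.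
   Context: $\boldsymbol{V}_j$ denotes the $j$-th row of $\boldsymbol{V}$; $\boldsymbol{\delta}^{(i)}_k$ the $k$-th entry of $\boldsymbol{\delta}^{(i)}$ and $\boldsymbol{\delta}^{(i)}_{a:b}$ the subvector of entries $a$ through $b$; $\boldsymbol{1}$ the all-ones vector; vector inequalities are componentwise. *)

theory Defs
  imports "HOL-Analysis.Analysis"
begin

text \<open>Data points are indexed by i in {1..ND}; the rows of
  V (resp. W) are indexed by k in {1..p1} (resp. {1..p2}); row k of V is the vector
  V k in R^r1, so (V g(x))_k = V k \<bullet> g x. The binary vectors delta^(i), gamma^(i)
  are delta i k, gamma i k (real-valued, restricted to {0,1}).\<close>

definition miqp_feasible ::
  "(real^'n \<Rightarrow> real^'r1) \<Rightarrow> (real^'n \<Rightarrow> real^'r2) \<Rightarrow> real \<Rightarrow> (nat \<Rightarrow> real^'n) \<Rightarrow>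
   nat \<Rightarrow> nat \<Rightarrow> nat \<Rightarrow>
   (nat \<Rightarrow> real^'r1) \<Rightarrow> (nat \<Rightarrow> real^'r2) \<Rightarrow> (nat \<Rightarrow> real) \<Rightarrow> (nat \<Rightarrow> real) \<Rightarrow>
   (nat \<Rightarrow> nat \<Rightarrow> real) \<Rightarrow> (nat \<Rightarrow> nat \<Rightarrow> real) \<Rightarrow> bool" where
  "miqp_feasible g h M x ND p1 p2 V W \<alpha> \<beta> \<gamma> \<delta> \<longleftrightarrow>
     (\<forall>i\<in>{1..ND}.
        (\<forall>k\<in>{1..p1}. V k \<bullet> g (x i) \<le> \<alpha> i) \<and>
        (\<forall>k\<in>{1..p1}. V k \<bullet> g (x i) + M * (1 - \<delta> i k) \<ge> \<alpha> i) \<and>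
        (\<Sum>k=1..p1. \<delta> i k) = 1 \<and>
        (\<forall>k\<in>{1..p1}. \<delta> i k \<in> {0, 1}) \<and>
        (\<forall>k\<in>{1..p2}. W k \<bullet> h (x i) \<le> \<beta> i) \<and>
        (\<forall>k\<in>{1..p2}. W k \<bullet> h (x i) + M * (1 - \<gamma> i k) \<ge> \<beta> i) \<and>
        (\<Sum>k=1..p2. \<gamma> i k) = 1 \<and>
        (\<forall>k\<in>{1..p2}. \<gamma> i k \<in> {0, 1}))"

definition miqp_objective :: "(nat \<Rightarrow> real) \<Rightarrow> nat \<Rightarrow> (nat \<Rightarrow> real) \<Rightarrow> (nat \<Rightarrow> real) \<Rightarrow> real" where
  "miqp_objective y ND \<alpha> \<beta> = (\<Sum>i=1..ND. (y i - (\<alpha> i - \<beta> i))^2)"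

end

theory Submission
  imports Defs
begin

text \<open>Relabelling the affine pieces of one max-affine block (permuting the rows of \<open>V\<close>
  together with the entries of every \<open>\<delta> i\<close>) preserves feasibility and leaves \<open>\<alpha>\<close>, \<open>\<beta>\<close> and
  hence the objective unchanged. Starting from an optimal solution, treat the data points
  \<open>i = 1, 2, \<dots>\<close> in turn: if the active piece \<open>\<kappa>\<close> of point \<open>i\<close> has index \<open>\<kappa> > i\<close>, swap the
  pieces \<open>\<kappa>\<close> and \<open>i\<close>; the earlier points only use pieces of index below \<open>i\<close> and are unaffected.

  An optimal solution exists by compactness. Feasibility depends on \<open>V\<close> only through the values
  \<open>V k \<bullet> g (x i)\<close>, and the objective only through \<open>\<alpha> - \<beta>\<close>, which does not change when every
  row of \<open>V\<close> is shifted by \<open>u\<close> and every row of \<open>W\<close> by \<open>w\<close> with \<open>u \<bullet> g (x i) = w \<bullet> h (x i)\<close>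
  for all \<open>i\<close>. Choosing such shifts and rows in the span of the data, every feasible point of
  bounded objective has a feasible representative of bounded size with the same objective, so a
  minimizing sequence has a convergent subsequence, whose limit is feasible and optimal.\<close>

definition max_affine_feasible ::
  "('a \<Rightarrow> 'b::real_inner) \<Rightarrow> real \<Rightarrow> (nat \<Rightarrow> 'a) \<Rightarrow> nat \<Rightarrow> nat \<Rightarrow>
   (nat \<Rightarrow> 'b) \<Rightarrow> (nat \<Rightarrow> real) \<Rightarrow> (nat \<Rightarrow> nat \<Rightarrow> real) \<Rightarrow> bool" where
  "max_affine_feasible g M x ND p V \<alpha> \<delta> \<longleftrightarrow>
     (\<forall>i\<in>{1..ND}.
        (\<forall>k\<in>{1..p}. V k \<bullet> g (x i) \<le> \<alpha> i) \<and>
        (\<forall>k\<in>{1..p}. V k \<bullet> g (x i) + M * (1 - \<delta> i k) \<ge> \<alpha> i) \<and>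
        (\<Sum>k=1..p. \<delta> i k) = 1 \<and>
        (\<forall>k\<in>{1..p}. \<delta> i k \<in> {0, 1}))"

lemma miqp_feasible_iff:
  "miqp_feasible g h M x ND p1 p2 V W \<alpha> \<beta> \<gamma> \<delta> \<longleftrightarrow>
     max_affine_feasible g M x ND p1 V \<alpha> \<delta> \<and> max_affine_feasible h M x ND p2 W \<beta> \<gamma>"
  unfolding miqp_feasible_def max_affine_feasible_def by blast

lemma max_affine_feasible_permute:
  assumes "max_affine_feasible g M x ND p V \<alpha> \<delta>" "\<pi> permutes {1..p}"
  shows "max_affine_feasible g M x ND p (V \<circ> \<pi>) \<alpha> (\<lambda>i. \<delta> i \<circ> \<pi>)"
proof -
  have "(\<Sum>k=1..p. \<delta> i (\<pi> k)) = (\<Sum>k=1..p. \<delta> i k)" for i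
    using sum.permute[OF assms(2), of "\<delta> i"] by (simp add: comp_def)
  moreover have "\<pi> k \<in> {1..p}" if "k \<in> {1..p}" for k
    using permutes_in_image[OF assms(2)] that by blast
  ultimately show ?thesis
    using assms(1) unfolding max_affine_feasible_def by auto
qed

lemma binary_sum_eq_1_imp_one_hot:
  fixes d :: "'a \<Rightarrow> real"
  assumes "finite A" "(\<Sum>k\<in>A. d k) = 1" "\<forall>k\<in>A. d k \<in> {0, 1}"
  shows "\<exists>\<kappa>\<in>A. \<forall>k\<in>A - {\<kappa>}. d k = 0"
proof -
  have "\<not> (\<forall>k\<in>A. d k = 0)"
    using assms(2) sum.neutral by (metis zero_neq_one)
  then obtain \<kappa> where \<kappa>: "\<kappa> \<in> A" "d \<kappa> = 1"
    using assms(3) by blast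
  have "d k = 0" if k: "k \<in> A - {\<kappa>}" for k
  proof (rule ccontr)
    assume "d k \<noteq> 0"
    then have "(\<Sum>j\<in>{\<kappa>, k}. d j) = 2"
      using assms(3) \<kappa> k by auto
    moreover have "(\<Sum>j\<in>{\<kappa>, k}. d j) \<le> (\<Sum>j\<in>A. d j)"
      using assms(1,3) \<kappa> k by (intro sum_mono2) auto
    ultimately show False
      using assms(2) by simp
  qed
  then show ?thesis
    using \<kappa>(1) by blast
qed

lemma max_affine_feasible_staircase:
  assumes feas: "max_affine_feasible g M x ND p V \<alpha> \<delta>" and "m \<le> ND"
  shows "\<exists>V' \<delta>'. max_affine_feasible g M x ND p V' \<alpha> \<delta>' \<and>
           (\<forall>i\<in>{1..m}. \<forall>k\<in>{i+1..p}. \<delta>' i k = 0)"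
  using \<open>m \<le> ND\<close>
proof (induction m)
  case 0
  then show ?case
    using feas by auto
next
  case (Suc m)
  then obtain V' \<delta>' where feas': "max_affine_feasible g M x ND p V' \<alpha> \<delta>'"
    and stair: "\<forall>i\<in>{1..m}. \<forall>k\<in>{i+1..p}. \<delta>' i k = 0"
    by auto
  have "(\<Sum>k=1..p. \<delta>' (Suc m) k) = 1" "\<forall>k\<in>{1..p}. \<delta>' (Suc m) k \<in> {0, 1}"
    using feas' Suc.prems unfolding max_affine_feasible_def by auto
  then obtain \<kappa> where \<kappa>: "\<kappa> \<in> {1..p}" "\<And>k. k \<in> {1..p} - {\<kappa>} \<Longrightarrow> \<delta>' (Suc m) k = 0"
    using binary_sum_eq_1_imp_one_hot[of "{1..p}" "\<delta>' (Suc m)"] by auto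
  show ?case
  proof (cases "\<kappa> \<le> Suc m")
    case True
    then have "\<forall>i\<in>{1..Suc m}. \<forall>k\<in>{i+1..p}. \<delta>' i k = 0"
      using stair \<kappa>(2) by (fastforce simp: le_Suc_eq)
    then show ?thesis
      using feas' by blast
  next
    case False
    \<comment> \<open>Points \<open>1..m\<close> only use pieces of index at most \<open>m\<close>, which the swap fixes.\<close>
    define \<tau> where "\<tau> = Transposition.transpose \<kappa> (Suc m)"
    have \<tau>: "\<tau> permutes {1..p}"
      unfolding \<tau>_def using \<kappa>(1) False by (intro permutes_swap_id) auto
    have "\<delta>' i (\<tau> k) = 0" if i: "i \<in> {1..Suc m}" and k: "k \<in> {i+1..p}" for i k
    proof (cases "i = Suc m")
      case True
      then have "\<tau> k \<in> {1..p} - {\<kappa>}"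
        using k permutes_in_image[OF \<tau>, of k] by (auto simp: \<tau>_def transpose_eq_iff)
      then show ?thesis
        using True \<kappa>(2) by blast
    next
      case False
      then have "\<tau> k \<in> {i+1..p}"
        using i k \<kappa>(1) \<open>\<not> \<kappa> \<le> Suc m\<close> by (auto simp: \<tau>_def Transposition.transpose_def)
      then show ?thesis
        using stair i False by auto
    qed
    then show ?thesis
      using max_affine_feasible_permute[OF feas' \<tau>] by (intro exI[of _ "V' \<circ> \<tau>"] exI) auto
  qed
qed

lemma max_affine_feasible_inner_bounds:
  assumes "max_affine_feasible g M x ND p V \<alpha> \<delta>" "M \<ge> 0" "i \<in> {1..ND}" "k \<in> {1..p}"
  shows "\<alpha> i - M \<le> V k \<bullet> g (x i)" "V k \<bullet> g (x i) \<le> \<alpha> i"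
proof -
  have "V k \<bullet> g (x i) \<le> \<alpha> i" "\<alpha> i \<le> V k \<bullet> g (x i) + M * (1 - \<delta> i k)" "\<delta> i k \<in> {0, 1}"
    using assms(1,3,4) unfolding max_affine_feasible_def by auto
  then show "\<alpha> i - M \<le> V k \<bullet> g (x i)" "V k \<bullet> g (x i) \<le> \<alpha> i"
    using assms(2) by auto
qed

lemma max_affine_feasible_shift:
  assumes "max_affine_feasible g M x ND p V \<alpha> \<delta>"
    and "\<And>i k. i \<in> {1..ND} \<Longrightarrow> k \<in> {1..p} \<Longrightarrow> V' k \<bullet> g (x i) = V k \<bullet> g (x i) + c i"
    and "\<And>i. i \<in> {1..ND} \<Longrightarrow> \<alpha>' i = \<alpha> i + c i"
  shows "max_affine_feasible g M x ND p V' \<alpha>' \<delta>"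
  using assms unfolding max_affine_feasible_def by auto

lemma max_affine_feasible_limit:
  assumes "\<And>n. max_affine_feasible g M x ND p (Vs n) (\<alpha>s n) (\<delta>s n)"
    and "\<And>k. k \<in> {1..p} \<Longrightarrow> (\<lambda>n. Vs n k) \<longlonglongrightarrow> V k"
    and "\<And>i. i \<in> {1..ND} \<Longrightarrow> (\<lambda>n. \<alpha>s n i) \<longlonglongrightarrow> \<alpha> i"
    and "\<And>i k. i \<in> {1..ND} \<Longrightarrow> k \<in> {1..p} \<Longrightarrow> (\<lambda>n. \<delta>s n i k) \<longlonglongrightarrow> \<delta> i k"
  shows "max_affine_feasible g M x ND p V \<alpha> \<delta>"
  unfolding max_affine_feasible_def
proof (intro ballI conjI)
  fix i assume i: "i \<in> {1..ND}"
  have "(\<lambda>n. \<Sum>k=1..p. \<delta>s n i k) \<longlonglongrightarrow> (\<Sum>k=1..p. \<delta> i k)"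
    using assms(4) i by (intro tendsto_sum) auto
  moreover have "(\<lambda>n. \<Sum>k=1..p. \<delta>s n i k) = (\<lambda>n. 1)"
    using assms(1) i unfolding max_affine_feasible_def by auto
  ultimately show "(\<Sum>k=1..p. \<delta> i k) = 1"
    by (simp add: LIMSEQ_const_iff)
  fix k assume k: "k \<in> {1..p}"
  have feas_n: "Vs n k \<bullet> g (x i) \<le> \<alpha>s n i" "\<alpha>s n i \<le> Vs n k \<bullet> g (x i) + M * (1 - \<delta>s n i k)"
    "\<delta>s n i k \<in> {0, 1}" for n
    using assms(1) i k unfolding max_affine_feasible_def by auto
  have V_lim: "(\<lambda>n. Vs n k \<bullet> g (x i)) \<longlonglongrightarrow> V k \<bullet> g (x i)"
    using assms(2) k by (intro tendsto_inner tendsto_const)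
  have \<alpha>_lim: "(\<lambda>n. \<alpha>s n i) \<longlonglongrightarrow> \<alpha> i"
    using assms(3) i .
  have \<delta>_lim: "(\<lambda>n. \<delta>s n i k) \<longlonglongrightarrow> \<delta> i k"
    using assms(4) i k .
  show "V k \<bullet> g (x i) \<le> \<alpha> i"
    by (intro LIMSEQ_le[OF V_lim \<alpha>_lim]) (use feas_n in auto)
  have "(\<lambda>n. Vs n k \<bullet> g (x i) + M * (1 - \<delta>s n i k)) \<longlonglongrightarrow> V k \<bullet> g (x i) + M * (1 - \<delta> i k)"
    by (intro tendsto_intros V_lim \<delta>_lim)
  then show "V k \<bullet> g (x i) + M * (1 - \<delta> i k) \<ge> \<alpha> i"
    by (intro LIMSEQ_le[OF \<alpha>_lim]) (use feas_n in auto)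
  show "\<delta> i k \<in> {0, 1}"
    by (rule closed_sequentially[OF _ _ \<delta>_lim]) (use feas_n in auto)
qed

lemma sum_abs_inner_pos_on_span:
  fixes a :: "'i \<Rightarrow> 'a::euclidean_space"
  assumes "finite I" "v \<in> span (a ` I)" "v \<noteq> 0"
  shows "(\<Sum>i\<in>I. \<bar>v \<bullet> a i\<bar>) > 0"
proof -
  have "\<not> (\<forall>i\<in>I. v \<bullet> a i = 0)"
  proof
    assume "\<forall>i\<in>I. v \<bullet> a i = 0"
    then have "orthogonal v v"
      using assms(2) by (intro orthogonal_to_span[of v "a ` I" v]) (auto simp: orthogonal_def)
    then show False
      using assms(3) by (simp add: orthogonal_def)
  qed
  then show ?thesis
    using assms(1) by (simp add: sum_nonneg_eq_0_iff order_le_neq_trans sum_nonneg)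
qed

lemma norm_le_sum_abs_inner_on_span:
  fixes a :: "'i \<Rightarrow> 'a::euclidean_space"
  assumes "finite I"
  obtains C where "C \<ge> 0" "\<And>v. v \<in> span (a ` I) \<Longrightarrow> norm v \<le> C * (\<Sum>i\<in>I. \<bar>v \<bullet> a i\<bar>)"
proof -
  define S where "S = span (a ` I) \<inter> sphere 0 1"
  define \<phi> where "\<phi> v = (\<Sum>i\<in>I. \<bar>v \<bullet> a i\<bar>)" for v
  have normalize: "v /\<^sub>R norm v \<in> S" if "v \<in> span (a ` I)" "v \<noteq> 0" for v
    using that by (simp add: S_def span_mul)
  show thesis
  proof (cases "S = {}")
    case True
    then have "v = 0" if "v \<in> span (a ` I)" for v
      using normalize that by blast
    then show thesis
      by (intro that[of 0]) auto
  next
    case False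
    have "compact S"
      unfolding S_def by (intro closed_Int_compact) auto
    moreover have "continuous_on S \<phi>"
      unfolding \<phi>_def by (intro continuous_intros)
    ultimately obtain v0 where v0: "v0 \<in> S" and v0_min: "\<And>v. v \<in> S \<Longrightarrow> \<phi> v0 \<le> \<phi> v"
      using continuous_attains_inf[OF _ False] by blast
    have "v0 \<in> span (a ` I)" "v0 \<noteq> 0"
      using v0 by (auto simp: S_def)
    then have \<phi>_pos: "\<phi> v0 > 0"
      unfolding \<phi>_def by (rule sum_abs_inner_pos_on_span[OF assms])
    have "norm v \<le> 1 / \<phi> v0 * \<phi> v" if "v \<in> span (a ` I)" for v
    proof (cases "v = 0")
      case False
      have "\<phi> v0 \<le> \<phi> (v /\<^sub>R norm v)"
        using v0_min normalize that False by blast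
      also have "\<dots> = \<phi> v / norm v"
        unfolding \<phi>_def by (simp add: abs_mult sum_distrib_left divide_inverse_commute)
      finally show ?thesis
        using False \<phi>_pos by (simp add: field_simps)
    qed (simp add: \<phi>_def)
    then show thesis
      using \<phi>_pos by (intro that[of "1 / \<phi> v0"]) (auto simp: \<phi>_def)
  qed
qed

lemma bounded_inner_representative:
  fixes a :: "'i \<Rightarrow> 'a::euclidean_space"
  assumes "finite I"
  obtains C P where "C \<ge> 0" "\<And>z i. i \<in> I \<Longrightarrow> P z \<bullet> a i = z \<bullet> a i"
    "\<And>z. norm (P z) \<le> C * (\<Sum>i\<in>I. \<bar>z \<bullet> a i\<bar>)"
proof -
  obtain C where C: "C \<ge> 0" "\<And>v. v \<in> span (a ` I) \<Longrightarrow> norm v \<le> C * (\<Sum>i\<in>I. \<bar>v \<bullet> a i\<bar>)"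
    using norm_le_sum_abs_inner_on_span[OF assms] by blast
  have "\<exists>z'. (\<forall>i\<in>I. z' \<bullet> a i = z \<bullet> a i) \<and> norm z' \<le> C * (\<Sum>i\<in>I. \<bar>z \<bullet> a i\<bar>)" for z
  proof -
    obtain z' w where z': "z' \<in> span (a ` I)" and w: "\<And>v. v \<in> span (a ` I) \<Longrightarrow> orthogonal w v"
      and z: "z = z' + w"
      using orthogonal_subspace_decomp_exists[of "a ` I" z] by metis
    have "z' \<bullet> a i = z \<bullet> a i" if "i \<in> I" for i
      using w[of "a i"] that by (simp add: z inner_add_left span_base orthogonal_def)
    then show ?thesis
      using C(2)[OF z'] by auto
  qed
  then obtain P where "\<And>z. (\<forall>i\<in>I. P z \<bullet> a i = z \<bullet> a i) \<and> norm (P z) \<le> C * (\<Sum>i\<in>I. \<bar>z \<bullet> a i\<bar>)"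
    by metis
  then show thesis
    using that C(1) by blast
qed

lemma max_affine_feasible_bounded_rows:
  fixes g :: "'a \<Rightarrow> 'b::euclidean_space"
  assumes "M \<ge> 0"
  obtains C where
    "\<And>V \<alpha> \<delta> Q. max_affine_feasible g M x ND p V \<alpha> \<delta> \<Longrightarrow> (\<forall>i\<in>{1..ND}. \<bar>\<alpha> i\<bar> \<le> Q) \<Longrightarrow>
       \<exists>V'. max_affine_feasible g M x ND p V' \<alpha> \<delta> \<and> (\<forall>k\<in>{1..p}. norm (V' k) \<le> C * (Q + M))"
proof -
  obtain C P where C: "C \<ge> 0" and P_inner: "\<And>z i. i \<in> {1..ND} \<Longrightarrow> P z \<bullet> g (x i) = z \<bullet> g (x i)"
    and P_norm: "\<And>z. norm (P z) \<le> C * (\<Sum>i=1..ND. \<bar>z \<bullet> g (x i)\<bar>)"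
    using bounded_inner_representative[of "{1..ND}" "\<lambda>i. g (x i)"] by auto
  show thesis
  proof (rule that[of "C * real ND"])
    fix V \<alpha> \<delta> Q
    assume feas: "max_affine_feasible g M x ND p V \<alpha> \<delta>" and Q: "\<forall>i\<in>{1..ND}. \<bar>\<alpha> i\<bar> \<le> Q"
    have "norm (P (V k)) \<le> C * real ND * (Q + M)" if k: "k \<in> {1..p}" for k
    proof -
      have "\<bar>V k \<bullet> g (x i)\<bar> \<le> Q + M" if "i \<in> {1..ND}" for i
        using max_affine_feasible_inner_bounds[OF feas assms that k] Q that by fastforce
      then have "(\<Sum>i=1..ND. \<bar>V k \<bullet> g (x i)\<bar>) \<le> real ND * (Q + M)"
        using sum_bounded_above[of "{1..ND}" "\<lambda>i. \<bar>V k \<bullet> g (x i)\<bar>" "Q + M"] by simp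
      then show ?thesis
        using P_norm[of "V k"] C by (metis mult.assoc mult_left_mono order_trans)
    qed
    moreover have "max_affine_feasible g M x ND p (\<lambda>k. P (V k)) \<alpha> \<delta>"
      using feas by (rule max_affine_feasible_shift[where c = "\<lambda>i. 0"]) (simp_all add: P_inner)
    ultimately show "\<exists>V'. max_affine_feasible g M x ND p V' \<alpha> \<delta> \<and>
        (\<forall>k\<in>{1..p}. norm (V' k) \<le> C * real ND * (Q + M))"
      by blast
  qed
qed

lemma bounded_inner_pair_representative:
  fixes a :: "'i \<Rightarrow> 'a::euclidean_space" and b :: "'i \<Rightarrow> 'b::euclidean_space"
  assumes "finite I"
  obtains C where "C \<ge> 0"
    "\<And>v w. \<exists>v' w'. (\<forall>i\<in>I. v' \<bullet> a i - w' \<bullet> b i = v \<bullet> a i - w \<bullet> b i) \<and>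
       norm v' \<le> C * (\<Sum>i\<in>I. \<bar>v \<bullet> a i - w \<bullet> b i\<bar>) \<and> norm w' \<le> C * (\<Sum>i\<in>I. \<bar>v \<bullet> a i - w \<bullet> b i\<bar>)"
proof -
  obtain C P where C: "C \<ge> 0" and P_inner: "\<And>z i. i \<in> I \<Longrightarrow> P z \<bullet> (a i, - b i) = z \<bullet> (a i, - b i)"
    and P_norm: "\<And>z. norm (P z) \<le> C * (\<Sum>i\<in>I. \<bar>z \<bullet> (a i, - b i)\<bar>)"
    using bounded_inner_representative[OF assms, of "\<lambda>i. (a i, - b i)"] by blast
  have inner_pair: "z \<bullet> (a i, - b i) = fst z \<bullet> a i - snd z \<bullet> b i" for z i
    by (simp add: inner_prod_def)
  show thesis
  proof (rule that[OF C])
    fix v w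
    show "\<exists>v' w'. (\<forall>i\<in>I. v' \<bullet> a i - w' \<bullet> b i = v \<bullet> a i - w \<bullet> b i) \<and>
       norm v' \<le> C * (\<Sum>i\<in>I. \<bar>v \<bullet> a i - w \<bullet> b i\<bar>) \<and> norm w' \<le> C * (\<Sum>i\<in>I. \<bar>v \<bullet> a i - w \<bullet> b i\<bar>)"
      using P_inner[of _ "(v, w)"] P_norm[of "(v, w)"]
        norm_fst_le[of "fst (P (v, w))" "snd (P (v, w))"] norm_snd_le[of "snd (P (v, w))" "fst (P (v, w))"]
      unfolding inner_pair by (intro exI[of _ "fst (P (v, w))"] exI[of _ "snd (P (v, w))"]) auto
  qed
qed

lemma max_affine_feasible_shift_bounded:
  assumes feas: "max_affine_feasible g M x ND p V \<alpha> \<delta>" and "M \<ge> 0" "0 < p"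
    and K: "norm (V 1 + u) \<le> K" and G: "\<And>i. i \<in> {1..ND} \<Longrightarrow> norm (g (x i)) \<le> G"
  shows "max_affine_feasible g M x ND p (\<lambda>k. V k + u) (\<lambda>i. \<alpha> i + u \<bullet> g (x i)) \<delta>" (is ?feas)
    and "\<And>i. i \<in> {1..ND} \<Longrightarrow> \<bar>\<alpha> i + u \<bullet> g (x i)\<bar> \<le> K * G + M"
proof -
  show ?feas
    using feas by (rule max_affine_feasible_shift) (simp_all add: inner_add_left)
  fix i assume i: "i \<in> {1..ND}"
  have "\<bar>(V 1 + u) \<bullet> g (x i)\<bar> \<le> K * G"
    using Cauchy_Schwarz_ineq2[of "V 1 + u" "g (x i)"] mult_mono[OF K G[OF i]] K
    by (meson norm_ge_zero order_trans)
  moreover have "1 \<in> {1..p}"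
    using assms(3) by simp
  ultimately show "\<bar>\<alpha> i + u \<bullet> g (x i)\<bar> \<le> K * G + M"
    using max_affine_feasible_inner_bounds[OF \<open>?feas\<close> \<open>M \<ge> 0\<close> i] by fastforce
qed

lemma miqp_feasible_bounded_offsets:
  fixes g :: "real^'n \<Rightarrow> real^'r1" and h :: "real^'n \<Rightarrow> real^'r2"
  assumes "0 < p1" "0 < p2" "M \<ge> 0"
  obtains R where
    "\<And>V W \<alpha> \<beta> \<gamma> \<delta>. miqp_feasible g h M x ND p1 p2 V W \<alpha> \<beta> \<gamma> \<delta> \<Longrightarrow>
       (\<forall>i\<in>{1..ND}. \<bar>\<alpha> i - \<beta> i\<bar> \<le> B) \<Longrightarrow>
       \<exists>V' W' \<alpha>' \<beta>'. miqp_feasible g h M x ND p1 p2 V' W' \<alpha>' \<beta>' \<gamma> \<delta> \<and>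
         (\<forall>i\<in>{1..ND}. \<alpha>' i - \<beta>' i = \<alpha> i - \<beta> i \<and> \<bar>\<alpha>' i\<bar> \<le> R \<and> \<bar>\<beta>' i\<bar> \<le> R)"
proof -
  define D where "D = {1..ND}"
  obtain C where C: "C \<ge> 0" "\<And>v w. \<exists>v' w'.
      (\<forall>i\<in>D. v' \<bullet> g (x i) - w' \<bullet> h (x i) = v \<bullet> g (x i) - w \<bullet> h (x i)) \<and>
      norm v' \<le> C * (\<Sum>i\<in>D. \<bar>v \<bullet> g (x i) - w \<bullet> h (x i)\<bar>) \<and>
      norm w' \<le> C * (\<Sum>i\<in>D. \<bar>v \<bullet> g (x i) - w \<bullet> h (x i)\<bar>)"
    using bounded_inner_pair_representative[of D "\<lambda>i. g (x i)" "\<lambda>i. h (x i)"] unfolding D_def by blast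
  define G where "G = (\<Sum>i\<in>D. norm (g (x i)) + norm (h (x i)))"
  define K where "K = C * (real ND * (B + M))"
  have gh_le: "norm (g (x i)) + norm (h (x i)) \<le> G" if "i \<in> D" for i
    unfolding G_def using that by (intro member_le_sum) (auto simp: D_def)
  have G: "norm (g (x i)) \<le> G" "norm (h (x i)) \<le> G" if "i \<in> {1..ND}" for i
    using gh_le[of i] that norm_ge_zero[of "g (x i)"] norm_ge_zero[of "h (x i)"]
    unfolding D_def by linarith+
  show thesis
  proof (rule that[of "K * G + M"])
    fix V W \<alpha> \<beta> \<gamma> \<delta>
    assume "miqp_feasible g h M x ND p1 p2 V W \<alpha> \<beta> \<gamma> \<delta>"
      and B: "\<forall>i\<in>{1..ND}. \<bar>\<alpha> i - \<beta> i\<bar> \<le> B"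
    then have fV: "max_affine_feasible g M x ND p1 V \<alpha> \<delta>"
      and fW: "max_affine_feasible h M x ND p2 W \<beta> \<gamma>"
      by (auto simp: miqp_feasible_iff)
    have "\<bar>V 1 \<bullet> g (x i) - W 1 \<bullet> h (x i)\<bar> \<le> B + M" if i: "i \<in> D" for i
      using max_affine_feasible_inner_bounds[OF fV assms(3), of i 1]
        max_affine_feasible_inner_bounds[OF fW assms(3), of i 1] B i assms(1,2)
      unfolding D_def by fastforce
    then have "(\<Sum>i\<in>D. \<bar>V 1 \<bullet> g (x i) - W 1 \<bullet> h (x i)\<bar>) \<le> real ND * (B + M)"
      using sum_bounded_above[of D _ "B + M"] by (simp add: D_def)
    \<comment> \<open>The new first rows \<open>v'\<close>, \<open>w'\<close> are small, and the induced shifts leave \<open>\<alpha> - \<beta>\<close> unchanged.\<close>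
    then obtain v' w' where vw: "\<forall>i\<in>D. v' \<bullet> g (x i) - w' \<bullet> h (x i) = V 1 \<bullet> g (x i) - W 1 \<bullet> h (x i)"
      and v': "norm (V 1 + (v' - V 1)) \<le> K" and w': "norm (W 1 + (w' - W 1)) \<le> K"
      using C(2)[of "V 1" "W 1"] mult_left_mono[OF _ C(1)] unfolding K_def by (simp, meson order_trans)
    note fV' = max_affine_feasible_shift_bounded[OF fV assms(3,1) v' G(1)]
    note fW' = max_affine_feasible_shift_bounded[OF fW assms(3,2) w' G(2)]
    have "(\<alpha> i + (v' - V 1) \<bullet> g (x i)) - (\<beta> i + (w' - W 1) \<bullet> h (x i)) = \<alpha> i - \<beta> i" if "i \<in> D" for i
      using vw that by (simp add: inner_diff_left algebra_simps)
    then show "\<exists>V' W' \<alpha>' \<beta>'. miqp_feasible g h M x ND p1 p2 V' W' \<alpha>' \<beta>' \<gamma> \<delta> \<and>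
         (\<forall>i\<in>{1..ND}. \<alpha>' i - \<beta>' i = \<alpha> i - \<beta> i \<and> \<bar>\<alpha>' i\<bar> \<le> K * G + M \<and> \<bar>\<beta>' i\<bar> \<le> K * G + M)"
      using fV' fW' unfolding D_def miqp_feasible_iff by blast
  qed
qed

lemma abs_le_1_plus_square: "\<bar>t :: real\<bar> \<le> 1 + t\<^sup>2"
  using zero_le_power2[of "\<bar>t\<bar> - 1"] by (simp add: power2_diff)

lemma miqp_objective_cong:
  assumes "\<And>i. i \<in> {1..ND} \<Longrightarrow> \<alpha>' i - \<beta>' i = \<alpha> i - \<beta> i"
  shows "miqp_objective y ND \<alpha>' \<beta>' = miqp_objective y ND \<alpha> \<beta>"
  unfolding miqp_objective_def using assms by (intro sum.cong) auto

lemma abs_diff_le_miqp_objective: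
  assumes "i \<in> {1..ND}"
  shows "\<bar>\<alpha> i - \<beta> i\<bar> \<le> (\<Sum>j=1..ND. \<bar>y j\<bar>) + 1 + miqp_objective y ND \<alpha> \<beta>"
proof -
  have "(y i - (\<alpha> i - \<beta> i))\<^sup>2 \<le> miqp_objective y ND \<alpha> \<beta>"
    unfolding miqp_objective_def using assms by (intro member_le_sum) auto
  moreover have "\<bar>y i\<bar> \<le> (\<Sum>j=1..ND. \<bar>y j\<bar>)"
    using assms by (intro member_le_sum) auto
  moreover note abs_le_1_plus_square[of "y i - (\<alpha> i - \<beta> i)"]
  ultimately show ?thesis
    by linarith
qed

lemma miqp_feasible_bounded_rows:
  fixes g :: "real^'n \<Rightarrow> real^'r1" and h :: "real^'n \<Rightarrow> real^'r2"
  assumes "0 < ND" "M \<ge> 0"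
  obtains C where
    "\<And>V W \<alpha> \<beta> \<gamma> \<delta> Q. miqp_feasible g h M x ND p1 p2 V W \<alpha> \<beta> \<gamma> \<delta> \<Longrightarrow>
       (\<forall>i\<in>{1..ND}. \<bar>\<alpha> i\<bar> \<le> Q \<and> \<bar>\<beta> i\<bar> \<le> Q) \<Longrightarrow>
       \<exists>V' W'. miqp_feasible g h M x ND p1 p2 V' W' \<alpha> \<beta> \<gamma> \<delta> \<and>
         (\<forall>k\<in>{1..p1}. norm (V' k) \<le> C * (Q + M)) \<and> (\<forall>k\<in>{1..p2}. norm (W' k) \<le> C * (Q + M))"
proof -
  obtain Cg where Cg: "\<And>V \<alpha> \<delta> Q. max_affine_feasible g M x ND p1 V \<alpha> \<delta> \<Longrightarrow>
       (\<forall>i\<in>{1..ND}. \<bar>\<alpha> i\<bar> \<le> Q) \<Longrightarrow>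
       \<exists>V'. max_affine_feasible g M x ND p1 V' \<alpha> \<delta> \<and> (\<forall>k\<in>{1..p1}. norm (V' k) \<le> Cg * (Q + M))"
    by (rule max_affine_feasible_bounded_rows[OF assms(2), where g = g and x = x and ND = ND and p = p1]) blast
  obtain Ch where Ch: "\<And>W \<beta> \<gamma> Q. max_affine_feasible h M x ND p2 W \<beta> \<gamma> \<Longrightarrow>
       (\<forall>i\<in>{1..ND}. \<bar>\<beta> i\<bar> \<le> Q) \<Longrightarrow>
       \<exists>W'. max_affine_feasible h M x ND p2 W' \<beta> \<gamma> \<and> (\<forall>k\<in>{1..p2}. norm (W' k) \<le> Ch * (Q + M))"
    by (rule max_affine_feasible_bounded_rows[OF assms(2), where g = h and x = x and ND = ND and p = p2]) blast
  show thesis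
  proof (rule that[of "max Cg Ch"])
    fix V W \<alpha> \<beta> \<gamma> \<delta> Q
    assume feas: "miqp_feasible g h M x ND p1 p2 V W \<alpha> \<beta> \<gamma> \<delta>"
      and Q: "\<forall>i\<in>{1..ND}. \<bar>\<alpha> i\<bar> \<le> Q \<and> \<bar>\<beta> i\<bar> \<le> Q"
    have "Q + M \<ge> 0"
      using Q assms by force
    then have CQ: "Cg * (Q + M) \<le> max Cg Ch * (Q + M)" "Ch * (Q + M) \<le> max Cg Ch * (Q + M)"
      by (simp_all add: mult_right_mono)
    obtain V' where fV: "max_affine_feasible g M x ND p1 V' \<alpha> \<delta>"
      and V': "\<forall>k\<in>{1..p1}. norm (V' k) \<le> Cg * (Q + M)"
      using Cg[of V \<alpha> \<delta> Q] feas Q by (auto simp: miqp_feasible_iff)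
    obtain W' where fW: "max_affine_feasible h M x ND p2 W' \<beta> \<gamma>"
      and W': "\<forall>k\<in>{1..p2}. norm (W' k) \<le> Ch * (Q + M)"
      using Ch[of W \<beta> \<gamma> Q] feas Q by (auto simp: miqp_feasible_iff)
    show "\<exists>V' W'. miqp_feasible g h M x ND p1 p2 V' W' \<alpha> \<beta> \<gamma> \<delta> \<and>
         (\<forall>k\<in>{1..p1}. norm (V' k) \<le> max Cg Ch * (Q + M)) \<and>
         (\<forall>k\<in>{1..p2}. norm (W' k) \<le> max Cg Ch * (Q + M))"
      using fV fW V' W' CQ unfolding miqp_feasible_iff by (meson order_trans)
  qed
qed

lemma miqp_feasible_bounded_representative:
  fixes g :: "real^'n \<Rightarrow> real^'r1" and h :: "real^'n \<Rightarrow> real^'r2"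
  assumes "0 < ND" "0 < p1" "0 < p2" "M \<ge> 0"
  obtains R where
    "\<And>V W \<alpha> \<beta> \<gamma> \<delta>. miqp_feasible g h M x ND p1 p2 V W \<alpha> \<beta> \<gamma> \<delta> \<Longrightarrow>
       miqp_objective y ND \<alpha> \<beta> \<le> K \<Longrightarrow>
       \<exists>V' W' \<alpha>' \<beta>'. miqp_feasible g h M x ND p1 p2 V' W' \<alpha>' \<beta>' \<gamma> \<delta> \<and>
         miqp_objective y ND \<alpha>' \<beta>' = miqp_objective y ND \<alpha> \<beta> \<and>
         (\<forall>i\<in>{1..ND}. \<bar>\<alpha>' i\<bar> \<le> R \<and> \<bar>\<beta>' i\<bar> \<le> R) \<and>
         (\<forall>k\<in>{1..p1}. norm (V' k) \<le> R) \<and> (\<forall>k\<in>{1..p2}. norm (W' k) \<le> R)"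
proof -
  define B where "B = (\<Sum>j=1..ND. \<bar>y j\<bar>) + 1 + K"
  obtain R where R: "\<And>V W \<alpha> \<beta> \<gamma> \<delta>. miqp_feasible g h M x ND p1 p2 V W \<alpha> \<beta> \<gamma> \<delta> \<Longrightarrow>
       (\<forall>i\<in>{1..ND}. \<bar>\<alpha> i - \<beta> i\<bar> \<le> B) \<Longrightarrow>
       \<exists>V' W' \<alpha>' \<beta>'. miqp_feasible g h M x ND p1 p2 V' W' \<alpha>' \<beta>' \<gamma> \<delta> \<and>
         (\<forall>i\<in>{1..ND}. \<alpha>' i - \<beta>' i = \<alpha> i - \<beta> i \<and> \<bar>\<alpha>' i\<bar> \<le> R \<and> \<bar>\<beta>' i\<bar> \<le> R)"
    by (rule miqp_feasible_bounded_offsets[OF assms(2-4), where g = g and h = h and x = x and ND = ND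
        and B = B]) blast
  obtain C where C: "\<And>V W \<alpha> \<beta> \<gamma> \<delta> Q. miqp_feasible g h M x ND p1 p2 V W \<alpha> \<beta> \<gamma> \<delta> \<Longrightarrow>
       (\<forall>i\<in>{1..ND}. \<bar>\<alpha> i\<bar> \<le> Q \<and> \<bar>\<beta> i\<bar> \<le> Q) \<Longrightarrow>
       \<exists>V' W'. miqp_feasible g h M x ND p1 p2 V' W' \<alpha> \<beta> \<gamma> \<delta> \<and>
         (\<forall>k\<in>{1..p1}. norm (V' k) \<le> C * (Q + M)) \<and> (\<forall>k\<in>{1..p2}. norm (W' k) \<le> C * (Q + M))"
    by (rule miqp_feasible_bounded_rows[OF assms(1,4), where g = g and h = h and x = x and ?p1.0 = p1
        and ?p2.0 = p2]) blast
  define R' where "R' = max R (C * (R + M))"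
  show thesis
  proof (rule that[of R'])
    fix V W \<alpha> \<beta> \<gamma> \<delta>
    assume feas: "miqp_feasible g h M x ND p1 p2 V W \<alpha> \<beta> \<gamma> \<delta>" and obj: "miqp_objective y ND \<alpha> \<beta> \<le> K"
    have "\<forall>i\<in>{1..ND}. \<bar>\<alpha> i - \<beta> i\<bar> \<le> B"
      using abs_diff_le_miqp_objective[of _ ND \<alpha> \<beta> y] obj unfolding B_def by (meson order_trans add_left_mono)
    then obtain V' W' \<alpha>' \<beta>' where feas': "miqp_feasible g h M x ND p1 p2 V' W' \<alpha>' \<beta>' \<gamma> \<delta>"
      and diff: "\<forall>i\<in>{1..ND}. \<alpha>' i - \<beta>' i = \<alpha> i - \<beta> i \<and> \<bar>\<alpha>' i\<bar> \<le> R \<and> \<bar>\<beta>' i\<bar> \<le> R"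
      using R[OF feas] by blast
    have "\<forall>i\<in>{1..ND}. \<bar>\<alpha>' i\<bar> \<le> R \<and> \<bar>\<beta>' i\<bar> \<le> R"
      using diff by blast
    then obtain V'' W'' where "miqp_feasible g h M x ND p1 p2 V'' W'' \<alpha>' \<beta>' \<gamma> \<delta>"
      and V'': "\<forall>k\<in>{1..p1}. norm (V'' k) \<le> C * (R + M)"
      and W'': "\<forall>k\<in>{1..p2}. norm (W'' k) \<le> C * (R + M)"
      using C[OF feas'] by blast
    moreover have "miqp_objective y ND \<alpha>' \<beta>' = miqp_objective y ND \<alpha> \<beta>"
      by (rule miqp_objective_cong) (use diff in blast)
    moreover have "\<forall>i\<in>{1..ND}. \<bar>\<alpha>' i\<bar> \<le> R' \<and> \<bar>\<beta>' i\<bar> \<le> R'"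
      using diff unfolding R'_def by (simp add: le_max_iff_disj)
    moreover have "\<forall>k\<in>{1..p1}. norm (V'' k) \<le> R'" "\<forall>k\<in>{1..p2}. norm (W'' k) \<le> R'"
      using V'' W'' unfolding R'_def by (simp_all add: le_max_iff_disj)
    ultimately show "\<exists>V' W' \<alpha>' \<beta>'. miqp_feasible g h M x ND p1 p2 V' W' \<alpha>' \<beta>' \<gamma> \<delta> \<and>
         miqp_objective y ND \<alpha>' \<beta>' = miqp_objective y ND \<alpha> \<beta> \<and>
         (\<forall>i\<in>{1..ND}. \<bar>\<alpha>' i\<bar> \<le> R' \<and> \<bar>\<beta>' i\<bar> \<le> R') \<and>
         (\<forall>k\<in>{1..p1}. norm (V' k) \<le> R') \<and> (\<forall>k\<in>{1..p2}. norm (W' k) \<le> R')"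
      by blast
  qed
qed

lemma subseq_convergent_on_finite:
  fixes f :: "nat \<Rightarrow> 'i \<Rightarrow> 'a::heine_borel"
  assumes "finite I" "\<And>i. i \<in> I \<Longrightarrow> bounded (range (\<lambda>n. f n i))"
  shows "\<exists>r. strict_mono r \<and> (\<forall>i\<in>I. convergent (\<lambda>n. f (r n) i))"
  using assms
proof (induction I arbitrary: f rule: finite_induct)
  case empty
  then show ?case
    by (intro exI[of _ id]) (auto simp: strict_mono_def)
next
  case (insert j I)
  then obtain r where r: "strict_mono r" "\<forall>i\<in>I. convergent (\<lambda>n. f (r n) i)"
    by blast
  have "bounded (range (\<lambda>n. f (r n) j))"
    using insert.prems[of j] by (rule bounded_subset) auto
  then obtain l r' where r': "strict_mono r'" "((\<lambda>n. f (r n) j) \<circ> r') \<longlonglongrightarrow> l"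
    using bounded_imp_convergent_subsequence by blast
  have "convergent (\<lambda>n. f (r (r' n)) i)" if "i \<in> insert j I" for i
  proof (cases "i = j")
    case True
    then show ?thesis
      using r'(2) by (auto simp: convergent_def comp_def)
  next
    case False
    then have "convergent ((\<lambda>n. f (r n) i) \<circ> r')"
      using r(2) r'(1) that convergent_subseq_convergent by blast
    then show ?thesis
      by (simp add: comp_def)
  qed
  moreover have "strict_mono (r \<circ> r')"
    using r(1) r'(1) by (rule strict_mono_o)
  ultimately show ?case
    by (auto simp: comp_def)
qed

lemma max_affine_feasible_seq_compact:
  fixes g :: "'a \<Rightarrow> 'b::euclidean_space" and Vs :: "nat \<Rightarrow> nat \<Rightarrow> 'b"
  assumes "0 < ND" "0 < p"
    and feas: "\<And>n. max_affine_feasible g M x ND p (Vs n) (\<alpha>s n) (\<delta>s n)"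
    and V_bound: "\<And>n k. k \<in> {1..p} \<Longrightarrow> norm (Vs n k) \<le> R"
    and \<alpha>_bound: "\<And>n i. i \<in> {1..ND} \<Longrightarrow> \<bar>\<alpha>s n i\<bar> \<le> R"
  obtains r V \<alpha> \<delta> where "strict_mono r" "max_affine_feasible g M x ND p V \<alpha> \<delta>"
    "\<And>i. i \<in> {1..ND} \<Longrightarrow> (\<lambda>n. \<alpha>s (r n) i) \<longlonglongrightarrow> \<alpha> i"
proof -
  define J where "J = {1..ND} \<times> {1..p}"
  define f where "f n = (\<lambda>(i, k). (Vs n k, \<alpha>s n i, \<delta>s n i k))" for n
  have "bounded (range (\<lambda>n. f n j))" if j: "j \<in> J" for j
  proof (rule bounded_subset)
    show "bounded (cball 0 R \<times> cball 0 R \<times> cball (0::real) 1)"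
      by (intro bounded_Times bounded_cball)
    obtain i k where ik: "j = (i, k)" and i: "i \<in> {1..ND}" and k: "k \<in> {1..p}"
      using j unfolding J_def by blast
    have "\<delta>s n i k \<in> {0, 1}" for n
      using feas[of n] i k unfolding max_affine_feasible_def by blast
    then have "\<bar>\<delta>s n i k\<bar> \<le> 1" for n
      by (metis abs_0 abs_1 insertE singletonD order.refl zero_le_one)
    then show "range (\<lambda>n. f n j) \<subseteq> cball 0 R \<times> cball 0 R \<times> cball 0 1"
      using V_bound[OF k] \<alpha>_bound[OF i] by (auto simp: f_def ik mem_cball_0)
  qed
  then obtain r where r: "strict_mono r" and conv: "\<forall>j\<in>J. convergent (\<lambda>n. f (r n) j)"
    using subseq_convergent_on_finite[of J f] by (auto simp: J_def)
  define L where "L j = lim (\<lambda>n. f (r n) j)" for j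
  have L: "(\<lambda>n. f (r n) (i, k)) \<longlonglongrightarrow> L (i, k)" if "i \<in> {1..ND}" "k \<in> {1..p}" for i k
    using conv that by (simp add: J_def L_def convergent_LIMSEQ_iff)
  have one: "1 \<in> {1..ND}" "1 \<in> {1..p}"
    using assms(1,2) by auto
  define V where "V k = fst (L (1, k))" for k
  define \<alpha> where "\<alpha> i = fst (snd (L (i, 1)))" for i
  define \<delta> where "\<delta> i k = snd (snd (L (i, k)))" for i k
  have \<alpha>_lim: "(\<lambda>n. \<alpha>s (r n) i) \<longlonglongrightarrow> \<alpha> i" if "i \<in> {1..ND}" for i
    using tendsto_fst[OF tendsto_snd[OF L[OF that one(2)]]] by (simp add: f_def \<alpha>_def)
  have feas_lim: "max_affine_feasible g M x ND p V \<alpha> \<delta>"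
  proof (rule max_affine_feasible_limit)
    show "max_affine_feasible g M x ND p (Vs (r n)) (\<alpha>s (r n)) (\<delta>s (r n))" for n
      by (rule feas)
    show "(\<lambda>n. Vs (r n) k) \<longlonglongrightarrow> V k" if "k \<in> {1..p}" for k
      using tendsto_fst[OF L[OF one(1) that]] by (simp add: f_def V_def)
    show "(\<lambda>n. \<delta>s (r n) i k) \<longlonglongrightarrow> \<delta> i k" if "i \<in> {1..ND}" "k \<in> {1..p}" for i k
      using tendsto_snd[OF tendsto_snd[OF L[OF that]]] by (simp add: f_def \<delta>_def)
  qed (fact \<alpha>_lim)
  show thesis
    using r feas_lim \<alpha>_lim by (rule that)
qed

lemma miqp_feasible_seq_compact:
  fixes g :: "real^'n \<Rightarrow> real^'r1" and h :: "real^'n \<Rightarrow> real^'r2"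
    and Vs :: "nat \<Rightarrow> nat \<Rightarrow> real^'r1" and Ws :: "nat \<Rightarrow> nat \<Rightarrow> real^'r2"
  assumes "0 < ND" "0 < p1" "0 < p2"
    and feas: "\<And>n. miqp_feasible g h M x ND p1 p2 (Vs n) (Ws n) (\<alpha>s n) (\<beta>s n) (\<gamma>s n) (\<delta>s n)"
    and V_bound: "\<And>n k. k \<in> {1..p1} \<Longrightarrow> norm (Vs n k) \<le> R"
    and W_bound: "\<And>n k. k \<in> {1..p2} \<Longrightarrow> norm (Ws n k) \<le> R"
    and \<alpha>_bound: "\<And>n i. i \<in> {1..ND} \<Longrightarrow> \<bar>\<alpha>s n i\<bar> \<le> R"
    and \<beta>_bound: "\<And>n i. i \<in> {1..ND} \<Longrightarrow> \<bar>\<beta>s n i\<bar> \<le> R"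
  obtains r V W \<alpha> \<beta> \<gamma> \<delta> where "strict_mono r" "miqp_feasible g h M x ND p1 p2 V W \<alpha> \<beta> \<gamma> \<delta>"
    "(\<lambda>n. miqp_objective y ND (\<alpha>s (r n)) (\<beta>s (r n))) \<longlonglongrightarrow> miqp_objective y ND \<alpha> \<beta>"
proof -
  have fVs: "max_affine_feasible g M x ND p1 (Vs n) (\<alpha>s n) (\<delta>s n)" for n
    using feas[of n] by (simp add: miqp_feasible_iff)
  obtain r1 V \<alpha> \<delta> where r1: "strict_mono r1" and fV: "max_affine_feasible g M x ND p1 V \<alpha> \<delta>"
    and \<alpha>_lim: "\<And>i. i \<in> {1..ND} \<Longrightarrow> (\<lambda>n. \<alpha>s (r1 n) i) \<longlonglongrightarrow> \<alpha> i"
    using max_affine_feasible_seq_compact[where Vs = Vs and \<alpha>s = \<alpha>s and \<delta>s = \<delta>s,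
        OF assms(1,2) fVs V_bound \<alpha>_bound] by blast
  have fWs: "max_affine_feasible h M x ND p2 (Ws (r1 n)) (\<beta>s (r1 n)) (\<gamma>s (r1 n))" for n
    using feas[of "r1 n"] by (simp add: miqp_feasible_iff)
  have W_bound': "norm (Ws (r1 n) k) \<le> R" if "k \<in> {1..p2}" for n k
    using W_bound[OF that] .
  have \<beta>_bound': "\<bar>\<beta>s (r1 n) i\<bar> \<le> R" if "i \<in> {1..ND}" for n i
    using \<beta>_bound[OF that] .
  obtain r2 W \<beta> \<gamma> where r2: "strict_mono r2" and fW: "max_affine_feasible h M x ND p2 W \<beta> \<gamma>"
    and \<beta>_lim: "\<And>i. i \<in> {1..ND} \<Longrightarrow> (\<lambda>n. \<beta>s (r1 (r2 n)) i) \<longlonglongrightarrow> \<beta> i"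
    using max_affine_feasible_seq_compact[where Vs = "\<lambda>n. Ws (r1 n)" and \<alpha>s = "\<lambda>n. \<beta>s (r1 n)"
        and \<delta>s = "\<lambda>n. \<gamma>s (r1 n)", OF assms(1,3) fWs W_bound' \<beta>_bound'] by blast
  have "(\<lambda>n. \<alpha>s (r1 (r2 n)) i) \<longlonglongrightarrow> \<alpha> i" if "i \<in> {1..ND}" for i
    using LIMSEQ_subseq_LIMSEQ[OF \<alpha>_lim[OF that] r2] by (simp add: comp_def)
  then have "(\<lambda>n. miqp_objective y ND (\<alpha>s (r1 (r2 n))) (\<beta>s (r1 (r2 n)))) \<longlonglongrightarrow> miqp_objective y ND \<alpha> \<beta>"
    unfolding miqp_objective_def by (intro tendsto_intros \<beta>_lim) auto
  moreover have "miqp_feasible g h M x ND p1 p2 V W \<alpha> \<beta> \<gamma> \<delta>"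
    using fV fW by (simp add: miqp_feasible_iff)
  ultimately show thesis
    using that[OF strict_mono_o[OF r1 r2]] by (simp add: comp_def)
qed

lemma miqp_feasible_trivial:
  assumes "0 < p1" "0 < p2" "M \<ge> 0"
  shows "miqp_feasible g h M x ND p1 p2 (\<lambda>k. 0) (\<lambda>k. 0) (\<lambda>i. 0) (\<lambda>i. 0)
    (\<lambda>i k. if k = 1 then 1 else 0) (\<lambda>i k. if k = 1 then 1 else 0)"
  using assms unfolding miqp_feasible_def by (auto simp: sum.delta)

lemma miqp_has_minimizer:
  fixes g :: "real^'n \<Rightarrow> real^'r1" and h :: "real^'n \<Rightarrow> real^'r2"
  assumes "0 < ND" "0 < p1" "0 < p2" "M \<ge> 0"
  shows "\<exists>V W \<alpha> \<beta> \<gamma> \<delta>. miqp_feasible g h M x ND p1 p2 V W \<alpha> \<beta> \<gamma> \<delta> \<and>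
           (\<forall>V' W' \<alpha>' \<beta>' \<gamma>' \<delta>'. miqp_feasible g h M x ND p1 p2 V' W' \<alpha>' \<beta>' \<gamma>' \<delta>' \<longrightarrow>
               miqp_objective y ND \<alpha> \<beta> \<le> miqp_objective y ND \<alpha>' \<beta>')"
proof -
  define F where "F = {miqp_objective y ND \<alpha> \<beta> | V W \<alpha> \<beta> \<gamma> \<delta>.
    miqp_feasible g h M x ND p1 p2 V W \<alpha> \<beta> \<gamma> \<delta>}"
  have "F \<noteq> {}"
    using miqp_feasible_trivial[OF assms(2-4)] unfolding F_def by blast
  moreover have F_bdd: "bdd_below F"
    unfolding F_def miqp_objective_def by (auto intro!: bdd_belowI[of _ 0] sum_nonneg)
  ultimately obtain t where tF: "\<And>n. t n \<in> F" and t_lim: "t \<longlonglongrightarrow> Inf F"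
    using closure_contains_Inf closure_sequential by metis
  obtain K where K: "\<And>n. t n \<le> K"
    using Bseq_bdd_above[OF convergent_imp_Bseq[OF convergentI[OF t_lim]]] by (auto simp: bdd_above_def)
  obtain R where R: "\<And>V W \<alpha> \<beta> \<gamma> \<delta>. miqp_feasible g h M x ND p1 p2 V W \<alpha> \<beta> \<gamma> \<delta> \<Longrightarrow>
       miqp_objective y ND \<alpha> \<beta> \<le> K \<Longrightarrow>
       \<exists>V' W' \<alpha>' \<beta>'. miqp_feasible g h M x ND p1 p2 V' W' \<alpha>' \<beta>' \<gamma> \<delta> \<and>
         miqp_objective y ND \<alpha>' \<beta>' = miqp_objective y ND \<alpha> \<beta> \<and>
         (\<forall>i\<in>{1..ND}. \<bar>\<alpha>' i\<bar> \<le> R \<and> \<bar>\<beta>' i\<bar> \<le> R) \<and>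
         (\<forall>k\<in>{1..p1}. norm (V' k) \<le> R) \<and> (\<forall>k\<in>{1..p2}. norm (W' k) \<le> R)"
    by (rule miqp_feasible_bounded_representative[OF assms, where g = g and h = h and x = x and y = y
        and K = K]) blast
  have "\<exists>V W \<alpha> \<beta> \<gamma> \<delta>. miqp_feasible g h M x ND p1 p2 V W \<alpha> \<beta> \<gamma> \<delta> \<and> miqp_objective y ND \<alpha> \<beta> = t n \<and>
      (\<forall>i\<in>{1..ND}. \<bar>\<alpha> i\<bar> \<le> R \<and> \<bar>\<beta> i\<bar> \<le> R) \<and>
      (\<forall>k\<in>{1..p1}. norm (V k) \<le> R) \<and> (\<forall>k\<in>{1..p2}. norm (W k) \<le> R)" for n
  proof -
    obtain V W \<alpha> \<beta> \<gamma> \<delta> where "miqp_feasible g h M x ND p1 p2 V W \<alpha> \<beta> \<gamma> \<delta>"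
      and "miqp_objective y ND \<alpha> \<beta> = t n"
      using tF[of n] unfolding F_def by force
    then show ?thesis
      using R K[of n] by fastforce
  qed
  then obtain Vs Ws \<alpha>s \<beta>s \<gamma>s \<delta>s where
    feas: "\<And>n. miqp_feasible g h M x ND p1 p2 (Vs n) (Ws n) (\<alpha>s n) (\<beta>s n) (\<gamma>s n) (\<delta>s n)"
    and obj: "\<And>n. miqp_objective y ND (\<alpha>s n) (\<beta>s n) = t n"
    and \<alpha>\<beta>_le: "\<And>n i. i \<in> {1..ND} \<Longrightarrow> \<bar>\<alpha>s n i\<bar> \<le> R \<and> \<bar>\<beta>s n i\<bar> \<le> R"
    and V_le: "\<And>n k. k \<in> {1..p1} \<Longrightarrow> norm (Vs n k) \<le> R"
    and W_le: "\<And>n k. k \<in> {1..p2} \<Longrightarrow> norm (Ws n k) \<le> R"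
    by metis
  obtain r V W \<alpha> \<beta> \<gamma> \<delta> where r: "strict_mono r" and feas_lim: "miqp_feasible g h M x ND p1 p2 V W \<alpha> \<beta> \<gamma> \<delta>"
    and obj_lim: "(\<lambda>n. miqp_objective y ND (\<alpha>s (r n)) (\<beta>s (r n))) \<longlonglongrightarrow> miqp_objective y ND \<alpha> \<beta>"
    using miqp_feasible_seq_compact[where Vs = Vs and Ws = Ws and \<alpha>s = \<alpha>s and \<beta>s = \<beta>s
        and \<gamma>s = \<gamma>s and \<delta>s = \<delta>s and R = R and y = y, OF assms(1-3) feas V_le W_le] \<alpha>\<beta>_le by blast
  have "(\<lambda>n. miqp_objective y ND (\<alpha>s (r n)) (\<beta>s (r n))) \<longlonglongrightarrow> Inf F"
    using LIMSEQ_subseq_LIMSEQ[OF t_lim r] by (simp add: obj comp_def)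
  with obj_lim have "miqp_objective y ND \<alpha> \<beta> = Inf F"
    by (rule LIMSEQ_unique)
  moreover have "Inf F \<le> miqp_objective y ND \<alpha>' \<beta>'"
    if "miqp_feasible g h M x ND p1 p2 V' W' \<alpha>' \<beta>' \<gamma>' \<delta>'" for V' W' \<alpha>' \<beta>' \<gamma>' \<delta>'
    using F_bdd that unfolding F_def by (intro cInf_lower) blast+
  ultimately show ?thesis
    using feas_lim by metis
qed

theorem proposition1:
  fixes g :: "real^'n \<Rightarrow> real^'r1" and h :: "real^'n \<Rightarrow> real^'r2"
    and x :: "nat \<Rightarrow> real^'n" and y :: "nat \<Rightarrow> real"
    and M :: real and ND p1 p2 :: nat
  assumes "0 < ND" "0 < p1" "0 < p2" "p1 \<le> ND" "p2 \<le> ND"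
    and "continuous_on UNIV g" "continuous_on UNIV h"
    and "M > 0"
  shows "\<exists>V W \<alpha> \<beta> \<gamma> \<delta>.
           miqp_feasible g h M x ND p1 p2 V W \<alpha> \<beta> \<gamma> \<delta> \<and>
           (\<forall>V' W' \<alpha>' \<beta>' \<gamma>' \<delta>'. miqp_feasible g h M x ND p1 p2 V' W' \<alpha>' \<beta>' \<gamma>' \<delta>' \<longrightarrow>
               miqp_objective y ND \<alpha> \<beta> \<le> miqp_objective y ND \<alpha>' \<beta>') \<and>
           (\<forall>i\<in>{1..p1-1}. \<forall>k\<in>{i+1..p1}. \<delta> i k = 0) \<and>
           (\<forall>i\<in>{1..p2-1}. \<forall>k\<in>{i+1..p2}. \<gamma> i k = 0)"
proof -
  obtain V W \<alpha> \<beta> \<gamma> \<delta> where feas: "miqp_feasible g h M x ND p1 p2 V W \<alpha> \<beta> \<gamma> \<delta>"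
    and opt: "\<forall>V' W' \<alpha>' \<beta>' \<gamma>' \<delta>'. miqp_feasible g h M x ND p1 p2 V' W' \<alpha>' \<beta>' \<gamma>' \<delta>' \<longrightarrow>
               miqp_objective y ND \<alpha> \<beta> \<le> miqp_objective y ND \<alpha>' \<beta>'"
    using miqp_has_minimizer[of ND p1 p2 M g h x y] assms(1-3,8) by auto
  obtain V' \<delta>' where V': "max_affine_feasible g M x ND p1 V' \<alpha> \<delta>'"
    and \<delta>': "\<forall>i\<in>{1..p1-1}. \<forall>k\<in>{i+1..p1}. \<delta>' i k = 0"
    using max_affine_feasible_staircase[of g M x ND p1 V \<alpha> \<delta> "p1 - 1"] feas assms(4)
    unfolding miqp_feasible_iff by force
  obtain W' \<gamma>' where W': "max_affine_feasible h M x ND p2 W' \<beta> \<gamma>'"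
    and \<gamma>': "\<forall>i\<in>{1..p2-1}. \<forall>k\<in>{i+1..p2}. \<gamma>' i k = 0"
    using max_affine_feasible_staircase[of h M x ND p2 W \<beta> \<gamma> "p2 - 1"] feas assms(5)
    unfolding miqp_feasible_iff by force
  show ?thesis
    using V' W' \<delta>' \<gamma>' opt unfolding miqp_feasible_iff by blast
qed

end
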